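(* Let $X$ be a non-empty set and let $\mathcal{U}\subseteq P(X)$ be anti-closed under finite intersections. Then $\mathcal{U}$ is anti-closed under arbitrary intersections.
   Context: For a family $\mathcal{U}\subseteq P(X)$: $\mathcal{U}$ is anti-closed under finite intersections if for every $n\in\mathbb{N}$ and all $A_1,\dots,A_n\in\mathcal{U}$ that are not all equal, $\bigcap_{i=1}^n A_i\notin\mathcal{U}$; $\mathcal{U}$ is anti-closed under arbitrary intersections if for every non-empty index set $J$ and all $A_i\in\mathcal{U}$ ($i\in J$) not all equal, $\bigcap_{i\in J}A_i\notin\mathcal{U}$; $\mathcal{U}$ is anti-closed under arbitrary unions if for every non-empty index set $J$ and all $A_i\in\mathcal{U}$ ($i\in J$) not all equal, $\bigcup_{i\in J}A_i\notin\mathcal{U}$. *)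

theory Defs
  imports Main
begin

definition anti_closed_fin_inter :: "'a set set \<Rightarrow> bool" where
  "anti_closed_fin_inter U \<longleftrightarrow>
     (\<forall>(n::nat) (A::nat \<Rightarrow> 'a set).
        (\<forall>i\<in>{1..n}. A i \<in> U) \<and> \<not> (\<forall>i\<in>{1..n}. \<forall>j\<in>{1..n}. A i = A j)
        \<longrightarrow> (\<Inter>i\<in>{1..n}. A i) \<notin> U)"

definition anti_closed_arb_inter :: "'i itself \<Rightarrow> 'a set set \<Rightarrow> bool" where
  "anti_closed_arb_inter _ U \<longleftrightarrow>
     (\<forall>(J::'i set) (A::'i \<Rightarrow> 'a set).
        J \<noteq> {} \<and> (\<forall>i\<in>J. A i \<in> U) \<and> \<not> (\<forall>i\<in>J. \<forall>j\<in>J. A i = A j)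
        \<longrightarrow> (\<Inter>i\<in>J. A i) \<notin> U)"

end

theory Submission
  imports Defs
begin

text \<open>If the intersection \<open>B\<close> of a family in \<open>U\<close> lay in \<open>U\<close>, each member \<open>A\<close> would
  satisfy \<open>A \<inter> B = B \<in> U\<close>; anti-closure for the two-element family \<open>A, B\<close> forces
  \<open>A = B\<close>, so all members coincide.\<close>

lemma anti_closed_fin_inter_subset_eq:
  assumes "anti_closed_fin_inter U" and "A \<in> U" and "B \<in> U" and "B \<subseteq> A"
  shows "A = B"
proof (rule ccontr)
  assume "A \<noteq> B"
  define F where "F = (\<lambda>m::nat. if m = 1 then B else A)"
  have two: "{1..2::nat} = {1, 2}" by auto
  have "(\<forall>i\<in>{1..2}. F i \<in> U) \<and> \<not> (\<forall>i\<in>{1..2}. \<forall>j\<in>{1..2}. F i = F j)"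
    using assms \<open>A \<noteq> B\<close> unfolding two F_def by auto
  with assms(1) have "(\<Inter>i\<in>{1..2}. F i) \<notin> U"
    unfolding anti_closed_fin_inter_def by blast
  moreover have "(\<Inter>i\<in>{1..2}. F i) = B"
    using \<open>B \<subseteq> A\<close> unfolding two F_def by auto
  ultimately show False using \<open>B \<in> U\<close> by simp
qed

theorem mainTheorem3:
  fixes X :: "'a set" and U :: "'a set set"
  assumes "X \<noteq> {}"
    and "U \<subseteq> Pow X"
    and "anti_closed_fin_inter U"
  shows "anti_closed_arb_inter TYPE('i) U"
  unfolding anti_closed_arb_inter_def
proof (intro allI impI notI)
  fix J :: "'i set" and A :: "'i \<Rightarrow> 'a set"
  assume family: "J \<noteq> {} \<and> (\<forall>i\<in>J. A i \<in> U) \<and> \<not> (\<forall>i\<in>J. \<forall>j\<in>J. A i = A j)"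
    and inter: "(\<Inter>i\<in>J. A i) \<in> U"
  have member_eq_inter: "A k = (\<Inter>i\<in>J. A i)" if "k \<in> J" for k
  proof (rule anti_closed_fin_inter_subset_eq[OF assms(3) _ inter])
    show "A k \<in> U" using family \<open>k \<in> J\<close> by simp
    show "(\<Inter>i\<in>J. A i) \<subseteq> A k" using \<open>k \<in> J\<close> by (rule INT_lower)
  qed
  have "A i = A j" if "i \<in> J" and "j \<in> J" for i j
    using member_eq_inter[OF \<open>i \<in> J\<close>] member_eq_inter[OF \<open>j \<in> J\<close>] by (rule trans[OF _ sym])
  with family show False by blast
qed

end
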